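(* Let $t_1,\dots,t_n$ be basic terms, $\kappa$ a time variable, and $\Delta$ the saturation of the sample set $\{t_1[\kappa],\dots,t_n[\kappa]\}$. Then $\mathbf{W}\not\models 1\le t_1\vee\cdots\vee t_n$ if, and only if, there exists a $\Delta$-diagram $\delta$ such that $\delta(\kappa)>\delta(t_i[\kappa])$ for each $i\in\{1,\dots,n\}$.
   Context: Time warps: join-preserving maps $f\colon\omega^+\to\omega^+$, $\omega^+=\omega\cup\{\omega\}$, ordered pointwise. $\mathbf{W}=\langle W,\wedge,\vee,\circ,{}^\star,\mathrm{id}\rangle$: pointwise meet/join, composition, identity, and $f^\star$ = largest time warp $h$ with $f\circ h\le p$, where $p(m)=\bigvee\{k\in\omega\mid k<m\}$. Terms are built from variables with $\wedge,\vee,\cdot,{}',1$ (interpreted as $\wedge,\vee,\circ,{}^\star,\mathrm{id}$); basic terms use only variables, $\cdot,{}',1$. Samples (formal expressions) are given by the grammar $\alpha::=\kappa\mid t[\alpha]\mid \mathrm{suc}(\alpha)\mid\mathrm{last}(t)$ with $\kappa$ from a countably infinite set of time variables and $t$ a basic term. Let $\leadsto$ be the relation on samples with $t[\alpha]\leadsto\alpha$, $\mathrm{suc}(\alpha)\leadsto\alpha$, $t[\alpha]\leadsto t[\mathrm{last}(t)]$, $(tu)[\alpha]\leadsto t[u[\alpha]]$, $t'[\alpha]\leadsto t[t'[\alpha]]$, $t'[\alpha]\leadsto t[\mathrm{suc}(t'[\alpha])]$. The saturation of a sample set $\Delta_0$ is the set of samples $\beta$ with $\alpha\leadsto^*\beta$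 for some $\alpha\in\Delta_0$ ($\leadsto^*$ reflexive-transitive closure); $\Delta$ is saturated if closed under $\leadsto$. Let $S(n)=n+1$ for $n\in\omega$, $S(\omega)=\omega$. For a saturated $\Delta$, a $\Delta$-diagram is a map $\delta\colon\Delta\to\omega^+$ such that, whenever the samples mentioned belong to $\Delta$: (1) $\delta(\alpha)\le\delta(\beta)\Rightarrow\delta(t[\alpha])\le\delta(t[\beta])$; (2) $\delta(\alpha)=0\Rightarrow\delta(t[\alpha])=0$; (3) $\delta(\mathrm{suc}(\alpha))=S(\delta(\alpha))$; (4) for $t[\alpha]\in\Delta$: $\delta(\mathrm{last}(t))\le\delta(\alpha)\iff\delta(t[\mathrm{last}(t)])=\delta(t[\alpha])$; (5) $\delta(\mathrm{last}(t))=\omega\Rightarrow\delta(t[\mathrm{last}(t)])=\omega$; (6) $\delta(1[\alpha])=\delta(\alpha)$; (7) $\delta(\mathrm{last}(1))=\omega$; (8) $\delta((tu)[\alpha])=\delta(t[u[\alpha]])$; (9) $\delta(\mathrm{last}(tu))=\omega\Rightarrow\delta(\mathrm{last}(t))=\delta(\mathrm{last}(u))=\omega$; (10) for $t'[\alpha]\in\Delta$: $0<\delta(\alpha)<\omega\Rightarrow\delta(t[t'[\alpha]])<\delta(\alpha)$; (11) for $t'[\alpha]\in\Delta$: $\delta(t'[\alpha])<\omega\Rightarrow\delta(\alpha)\le\delta(t[\mathrm{suc}(t'[\alpha])])$; (12) $\delta(\mathrm{last}(t'))=\omega\Rightarrow\delta(\mathrm{last}(t))=\omega$. *)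

theory Defs
  imports Main "HOL-Library.Extended_Nat"
begin

text \<open>omega^+ is modelled by enat, with omega = infinity.
  A time warp is a map preserving all joins (suprema of arbitrary subsets,
  including the empty one).\<close>

definition time_warp :: "(enat \<Rightarrow> enat) \<Rightarrow> bool" where
  "time_warp f \<longleftrightarrow> (\<forall>A::enat set. f (Sup A) = Sup (f ` A))"

definition pred_tw :: "enat \<Rightarrow> enat" where
  "pred_tw m = Sup {enat k | k. enat k < m}"

definition tw_star :: "(enat \<Rightarrow> enat) \<Rightarrow> (enat \<Rightarrow> enat)" where
  "tw_star f = (GREATEST h. time_warp h \<and> f \<circ> h \<le> pred_tw)"

datatype trm = Var nat | Meet trm trm | Join trm trm | Comp trm trm | Star trm | One

fun basic :: "trm \<Rightarrow> bool" where
  "basic (Var v) = True"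
| "basic (Meet s t) = False"
| "basic (Join s t) = False"
| "basic (Comp s t) = (basic s \<and> basic t)"
| "basic (Star t) = basic t"
| "basic One = True"

fun eval :: "(nat \<Rightarrow> enat \<Rightarrow> enat) \<Rightarrow> trm \<Rightarrow> enat \<Rightarrow> enat" where
  "eval \<sigma> (Var v) = \<sigma> v"
| "eval \<sigma> (Meet s t) = (\<lambda>x. inf (eval \<sigma> s x) (eval \<sigma> t x))"
| "eval \<sigma> (Join s t) = (\<lambda>x. sup (eval \<sigma> s x) (eval \<sigma> t x))"
| "eval \<sigma> (Comp s t) = eval \<sigma> s \<circ> eval \<sigma> t"
| "eval \<sigma> (Star t) = tw_star (eval \<sigma> t)"
| "eval \<sigma> One = id"

definition W_models_le :: "trm \<Rightarrow> trm \<Rightarrow> bool" where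
  "W_models_le s u \<longleftrightarrow>
     (\<forall>\<sigma>. (\<forall>v. time_warp (\<sigma> v)) \<longrightarrow> (\<forall>x. eval \<sigma> s x \<le> eval \<sigma> u x))"

fun joins :: "trm list \<Rightarrow> trm" where
  "joins [] = One"  (* never used: the theorem assumes a nonempty list *)
| "joins [t] = t"
| "joins (t # ts) = Join t (joins ts)"

datatype sample = TVar nat | App trm sample | SSuc sample | Last trm

inductive step :: "sample \<Rightarrow> sample \<Rightarrow> bool" where
  "step (App t a) a"
| "step (SSuc a) a"
| "step (App t a) (App t (Last t))"
| "step (App (Comp t u) a) (App t (App u a))"
| "step (App (Star t) a) (App t (App (Star t) a))"
| "step (App (Star t) a) (App t (SSuc (App (Star t) a)))"

definition saturation :: "sample set \<Rightarrow> sample set" where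
  "saturation D0 = {b. \<exists>a\<in>D0. step\<^sup>*\<^sup>* a b}"

definition diagram :: "sample set \<Rightarrow> (sample \<Rightarrow> enat) \<Rightarrow> bool" where
  "diagram D \<delta> \<longleftrightarrow>
    (\<forall>t a b. a \<in> D \<and> b \<in> D \<and> App t a \<in> D \<and> App t b \<in> D \<longrightarrow>
        \<delta> a \<le> \<delta> b \<longrightarrow> \<delta> (App t a) \<le> \<delta> (App t b)) \<and>
    (\<forall>t a. a \<in> D \<and> App t a \<in> D \<longrightarrow> \<delta> a = 0 \<longrightarrow> \<delta> (App t a) = 0) \<and>
    (\<forall>a. a \<in> D \<and> SSuc a \<in> D \<longrightarrow> \<delta> (SSuc a) = eSuc (\<delta> a)) \<and>
    (\<forall>t a. App t a \<in> D \<and> a \<in> D \<and> Last t \<in> D \<and> App t (Last t) \<in> D \<longrightarrow>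
        (\<delta> (Last t) \<le> \<delta> a \<longleftrightarrow> \<delta> (App t (Last t)) = \<delta> (App t a))) \<and>
    (\<forall>t. Last t \<in> D \<and> App t (Last t) \<in> D \<longrightarrow>
        \<delta> (Last t) = \<infinity> \<longrightarrow> \<delta> (App t (Last t)) = \<infinity>) \<and>
    (\<forall>a. App One a \<in> D \<and> a \<in> D \<longrightarrow> \<delta> (App One a) = \<delta> a) \<and>
    (Last One \<in> D \<longrightarrow> \<delta> (Last One) = \<infinity>) \<and>
    (\<forall>t u a. App (Comp t u) a \<in> D \<and> App t (App u a) \<in> D \<longrightarrow>
        \<delta> (App (Comp t u) a) = \<delta> (App t (App u a))) \<and>
    (\<forall>t u. Last (Comp t u) \<in> D \<and> Last t \<in> D \<and> Last u \<in> D \<longrightarrow>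
        \<delta> (Last (Comp t u)) = \<infinity> \<longrightarrow> \<delta> (Last t) = \<infinity> \<and> \<delta> (Last u) = \<infinity>) \<and>
    (\<forall>t a. App (Star t) a \<in> D \<and> a \<in> D \<and> App t (App (Star t) a) \<in> D \<longrightarrow>
        0 < \<delta> a \<and> \<delta> a < \<infinity> \<longrightarrow> \<delta> (App t (App (Star t) a)) < \<delta> a) \<and>
    (\<forall>t a. App (Star t) a \<in> D \<and> a \<in> D \<and> App t (SSuc (App (Star t) a)) \<in> D \<longrightarrow>
        \<delta> (App (Star t) a) < \<infinity> \<longrightarrow> \<delta> a \<le> \<delta> (App t (SSuc (App (Star t) a)))) \<and>
    (\<forall>t. Last (Star t) \<in> D \<and> Last t \<in> D \<longrightarrow>
        \<delta> (Last (Star t)) = \<infinity> \<longrightarrow> \<delta> (Last t) = \<infinity>)"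

end

theory Submission
  imports Defs
begin

text \<open>If an assignment \<open>\<sigma>\<close> of time warps and a point \<open>x\<close> refute \<open>1 \<le> t\<^sub>1 \<or> \<dots> \<or> t\<^sub>n\<close>,
  evaluating samples under \<open>\<sigma>\<close> yields the required diagram: \<open>\<kappa>\<close> denotes \<open>x\<close>, \<open>last(t)\<close> the least point
  at which the time warp denoted by \<open>t\<close> reaches its value at \<open>\<omega>\<close>, and \<open>f\<^sup>\<star>\<close> is the residual
  \<open>x \<mapsto> sup {k | f k < x}\<close>.

  Conversely, the saturation is finite, so for every variable \<open>v\<close> a diagram prescribes finitely
  many monotone values \<open>v(\<delta> \<alpha>) = \<delta>(v[\<alpha>])\<close>. These are interpolated by a time warp that stays
  finite below \<open>\<omega>\<close> whenever \<open>\<delta>(last(v)) = \<omega>\<close>. By induction on basic terms the resulting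
  assignment satisfies \<open>t(\<delta> \<alpha>) = \<delta>(t[\<alpha>])\<close> on the saturation; for a star, clauses (10) and (11)
  say that \<open>\<delta>(t'[\<alpha>])\<close> is the residual of \<open>t\<close> at \<open>\<delta> \<alpha>\<close>. At \<open>\<kappa>\<close> this refutes the inequation.\<close>

section \<open>Time warps\<close>

lemma Sup_enat_mem: "(Sup A :: enat) \<noteq> \<infinity> \<Longrightarrow> A \<noteq> {} \<Longrightarrow> Sup A \<in> A"
  unfolding Sup_enat_def by (auto split: if_splits)

lemma Sup_finite_enat_neq_infinity: "finite A \<Longrightarrow> \<infinity> \<notin> A \<Longrightarrow> Sup A \<noteq> (\<infinity> :: enat)"
proof
  assume "finite A" "\<infinity> \<notin> A" "Sup A = \<infinity>"
  then have "A \<noteq> {}" "Sup A = Max A" by (auto simp: Sup_enat_def split: if_splits)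
  then show False using \<open>finite A\<close> \<open>\<infinity> \<notin> A\<close> \<open>Sup A = \<infinity>\<close> Max_in by metis
qed

lemma enat_le_if_finite_le:
  assumes "\<And>n. enat n \<le> x \<Longrightarrow> enat n \<le> y"
  shows "x \<le> (y::enat)"
proof (cases x)
  case infinity
  then have "enat (Suc n) \<le> y" for n using assms by simp
  then show ?thesis by (cases y) (simp_all, metis Suc_n_not_le_n)
next
  case (enat m)
  then show ?thesis using assms[of m] by simp
qed

lemma finite_enat_bounded_below_infinity:
  assumes "finite (A :: enat set)"
  shows "\<exists>N. \<forall>x\<in>A. x \<noteq> \<infinity> \<longrightarrow> x \<le> enat N"
proof -
  obtain N where N: "\<forall>n\<in>the_enat ` A. n \<le> N"
    using assms finite_nat_set_iff_bounded_le by blast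
  have "x \<le> enat N" if "x \<in> A" "x \<noteq> \<infinity>" for x
    using N that by (cases x) force+
  then show ?thesis by blast
qed

lemma SUP_enat_range: "(SUP n. enat n) = \<infinity>"
  by (rule antisym, simp, rule enat_le_if_finite_le) (auto intro: SUP_upper)

lemma time_warp_iff:
  "time_warp f \<longleftrightarrow> f 0 = 0 \<and> mono f \<and> f \<infinity> = (SUP n. f (enat n))"
proof
  assume tw: "time_warp f"
  have "f 0 = 0"
    using tw[unfolded time_warp_def, rule_format, of "{}"] by (simp add: bot_enat_def)
  moreover have "mono f"
  proof
    fix x y :: enat assume "x \<le> y"
    then show "f x \<le> f y"
      using tw[unfolded time_warp_def, rule_format, of "{x, y}"] by (simp add: sup_absorb2 sup.absorb_iff2)
  qed
  moreover have "f \<infinity> = (SUP n. f (enat n))"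
    using tw[unfolded time_warp_def, rule_format, of "range enat"] by (simp add: SUP_enat_range image_image)
  ultimately show "f 0 = 0 \<and> mono f \<and> f \<infinity> = (SUP n. f (enat n))" by blast
next
  assume "f 0 = 0 \<and> mono f \<and> f \<infinity> = (SUP n. f (enat n))"
  then have zero: "f 0 = 0" and mono: "mono f" and cont: "f \<infinity> = (SUP n. f (enat n))" by auto
  show "time_warp f"
    unfolding time_warp_def
  proof
    fix A :: "enat set"
    consider "A = {}" | "Sup A \<in> A" | "Sup A = \<infinity>" using Sup_enat_mem by blast
    then show "f (Sup A) = Sup (f ` A)"
    proof cases
      case 1
      then show ?thesis using zero by (simp add: bot_enat_def)
    next
      case 2
      then show ?thesis using mono by (metis Sup_upper antisym imageI mono_Sup)
    next
      case 3
      have "f \<infinity> \<le> Sup (f ` A)" unfolding cont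
      proof (rule SUP_least)
        fix n
        obtain a where "a \<in> A" "enat n < a" using 3 less_Sup_iff by (metis enat_ord_code(4))
        then show "f (enat n) \<le> Sup (f ` A)" using mono by (meson SUP_upper2 less_imp_le monoD)
      qed
      moreover have "Sup (f ` A) \<le> f \<infinity>" using mono by (simp add: SUP_least monoD)
      ultimately show ?thesis using 3 by simp
    qed
  qed
qed

lemma time_warp_zero: "time_warp f \<Longrightarrow> f 0 = 0"
  and time_warp_mono: "time_warp f \<Longrightarrow> mono f"
  and time_warp_infinity: "time_warp f \<Longrightarrow> f \<infinity> = (SUP n. f (enat n))"
  by (simp_all add: time_warp_iff)

lemma time_warp_id: "time_warp id"
  unfolding time_warp_def by simp

lemma time_warp_comp: "time_warp f \<Longrightarrow> time_warp g \<Longrightarrow> time_warp (f \<circ> g)"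
  unfolding time_warp_def by (simp add: image_comp)

lemma time_warp_sup: "time_warp f \<Longrightarrow> time_warp g \<Longrightarrow> time_warp (\<lambda>x. sup (f x) (g x))"
  unfolding time_warp_def
proof (intro allI)
  fix A :: "enat set"
  assume "\<forall>A. f (Sup A) = Sup (f ` A)" "\<forall>A. g (Sup A) = Sup (g ` A)"
  then show "sup (f (Sup A)) (g (Sup A)) = Sup ((\<lambda>x. sup (f x) (g x)) ` A)"
    by (simp add: Complete_Lattices.SUP_sup_distrib)
qed

lemma time_warp_inf:
  assumes f: "time_warp f" and g: "time_warp g"
  shows "time_warp (\<lambda>x. inf (f x) (g x))"
proof -
  have mono: "mono f" "mono g" using f g by (simp_all add: time_warp_mono)
  have "inf (f \<infinity>) (g \<infinity>) \<le> (SUP n. inf (f (enat n)) (g (enat n)))"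
  proof (rule ccontr)
    let ?s = "SUP n. inf (f (enat n)) (g (enat n))"
    assume "\<not> ?thesis"
    then have "?s < f \<infinity>" "?s < g \<infinity>" by (auto simp: not_le inf_min)
    then obtain m n where "?s < f (enat m)" "?s < g (enat n)"
      using f g by (auto simp: time_warp_infinity less_SUP_iff)
    moreover have "f (enat m) \<le> f (enat (max m n))" "g (enat n) \<le> g (enat (max m n))"
      using mono by (simp_all add: monoD)
    ultimately have "?s < inf (f (enat (max m n))) (g (enat (max m n)))"
      by (auto simp: inf_min intro: less_le_trans)
    moreover have "inf (f (enat (max m n))) (g (enat (max m n))) \<le> ?s"
      by (rule SUP_upper) simp
    ultimately show False by simp
  qed
  moreover have "(SUP n. inf (f (enat n)) (g (enat n))) \<le> inf (f \<infinity>) (g \<infinity>)"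
    by (intro SUP_least inf_mono) (simp_all add: monoD[OF mono(1)] monoD[OF mono(2)])
  ultimately show ?thesis
    using f g mono by (auto simp: time_warp_iff mono_def le_infI1 le_infI2 intro: antisym)
qed

section \<open>Residuals and last points\<close>

definition star_sup :: "(enat \<Rightarrow> enat) \<Rightarrow> enat \<Rightarrow> enat" where
  "star_sup f x = Sup {k. f k < x}"

lemma star_sup_mono: "mono (star_sup f)"
  unfolding star_sup_def by (rule monoI) (auto intro!: Sup_subset_mono)

lemma star_sup_zero: "star_sup f 0 = 0"
  unfolding star_sup_def by (simp add: bot_enat_def)

lemma time_warp_star_sup: "time_warp (star_sup f)"
  unfolding time_warp_def
proof
  fix A :: "enat set"
  have "star_sup f (Sup A) \<le> Sup (star_sup f ` A)"
    unfolding star_sup_def[of f "Sup A"]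
  proof (rule Sup_least)
    fix k assume "k \<in> {k. f k < Sup A}"
    then obtain a where "a \<in> A" "f k < a" using less_Sup_iff by auto
    then have "k \<le> star_sup f a" unfolding star_sup_def by (auto intro: Sup_upper)
    then show "k \<le> Sup (star_sup f ` A)" using \<open>a \<in> A\<close> by (meson SUP_upper2)
  qed
  moreover have "Sup (star_sup f ` A) \<le> star_sup f (Sup A)"
    using star_sup_mono by (simp add: SUP_least Sup_upper monoD)
  ultimately show "star_sup f (Sup A) = Sup (star_sup f ` A)" by simp
qed

lemma le_pred_tw: "y < x \<Longrightarrow> y \<le> pred_tw x"
  unfolding pred_tw_def by (cases y) (auto intro: Sup_upper)

lemma pred_tw_less: "0 < x \<Longrightarrow> x < \<infinity> \<Longrightarrow> pred_tw x < x"
proof -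
  assume "0 < x" "x < \<infinity>"
  then obtain n where n: "x = enat (Suc n)"
    by (metis enat_0_iff(1) gr0_implies_Suc less_infinityE not_gr_zero)
  have "pred_tw x \<le> enat n"
    unfolding pred_tw_def n by (rule Sup_least) auto
  then show ?thesis using n by (simp add: le_less_trans)
qed

lemma star_sup_below_pred_tw:
  assumes "time_warp f"
  shows "f (star_sup f x) \<le> pred_tw x"
proof -
  have "f (star_sup f x) = Sup (f ` {k. f k < x})"
    using assms unfolding time_warp_def star_sup_def by blast
  also have "\<dots> \<le> pred_tw x" by (rule SUP_least) (auto intro: le_pred_tw)
  finally show ?thesis .
qed

lemma star_sup_greatest:
  assumes h: "time_warp h" and below: "f \<circ> h \<le> pred_tw"
  shows "h \<le> star_sup f"
proof (rule le_funI)
  have finite_case: "h (enat n) \<le> star_sup f (enat n)" for n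
  proof (cases "n = 0")
    case True
    then show ?thesis using time_warp_zero[OF h] by (simp add: zero_enat_def[symmetric])
  next
    case False
    have "f (h (enat n)) \<le> pred_tw (enat n)" using below by (simp add: le_fun_def)
    also have "\<dots> < enat n" by (rule pred_tw_less) (use False in \<open>simp_all add: zero_enat_def\<close>)
    finally show ?thesis unfolding star_sup_def by (auto intro: Sup_upper)
  qed
  fix x
  show "h x \<le> star_sup f x"
  proof (cases x)
    case infinity
    have "h \<infinity> = (SUP n. h (enat n))" using h by (rule time_warp_infinity)
    also have "\<dots> \<le> star_sup f \<infinity>"
      using finite_case star_sup_mono by (meson SUP_least enat_ord_code(3) monoD order_trans)
    finally show ?thesis using infinity by simp
  qed (simp add: finite_case)
qed

lemma tw_star_eq_star_sup: "time_warp f \<Longrightarrow> tw_star f = star_sup f"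
  unfolding tw_star_def
proof (rule Greatest_equality)
  assume "time_warp f"
  then show "time_warp (star_sup f) \<and> f \<circ> star_sup f \<le> pred_tw"
    by (auto simp: le_fun_def time_warp_star_sup star_sup_below_pred_tw)
qed (use star_sup_greatest in blast)

lemma time_warp_eval: "(\<And>v. time_warp (\<sigma> v)) \<Longrightarrow> time_warp (eval \<sigma> t)"
  by (induction t)
    (auto simp: time_warp_id time_warp_comp time_warp_inf time_warp_sup time_warp_star_sup
      tw_star_eq_star_sup)

lemma eval_Star: "(\<And>v. time_warp (\<sigma> v)) \<Longrightarrow> eval \<sigma> (Star t) = star_sup (eval \<sigma> t)"
  by (simp add: time_warp_eval tw_star_eq_star_sup)

lemma star_sup_eq_infinity_iff:
  assumes "mono f"
  shows "star_sup f x = \<infinity> \<longleftrightarrow> (\<forall>n. f (enat n) < x)"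
proof
  assume "star_sup f x = \<infinity>"
  show "\<forall>n. f (enat n) < x"
  proof
    fix n
    have "enat n < Sup {k. f k < x}" using \<open>star_sup f x = \<infinity>\<close> by (simp add: star_sup_def)
    then obtain k where "f k < x" "enat n < k" by (auto simp: less_Sup_iff)
    then show "f (enat n) < x" using assms by (meson le_less_trans less_imp_le monoD)
  qed
next
  assume "\<forall>n. f (enat n) < x"
  then have "enat n \<le> star_sup f x" for n unfolding star_sup_def by (auto intro: Sup_upper)
  then show "star_sup f x = \<infinity>" by (metis enat_le_if_finite_le top.extremum_unique top_enat_def)
qed

lemma star_sup_eqI:
  assumes "mono f"
    and below: "\<And>n. enat n \<le> s \<Longrightarrow> f (enat n) < x"
    and above: "s \<noteq> \<infinity> \<Longrightarrow> x \<le> f (eSuc s)"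
  shows "star_sup f x = s"
  unfolding star_sup_def
proof (rule antisym)
  show "Sup {k. f k < x} \<le> s"
  proof (rule Sup_least, rule ccontr)
    fix k assume "k \<in> {k. f k < x}" "\<not> k \<le> s"
    then have "s < k" by simp
    have "s \<noteq> \<infinity>" using \<open>s < k\<close> by (metis enat_ord_simps(6))
    have "eSuc s \<le> k" using \<open>s < k\<close> by (rule ileI1)
    then have "x \<le> f k" using \<open>s \<noteq> \<infinity>\<close> above \<open>mono f\<close> by (meson monoD order_trans)
    then show False using \<open>k \<in> {k. f k < x}\<close> by simp
  qed
  show "s \<le> Sup {k. f k < x}"
  proof (rule enat_le_if_finite_le)
    fix n assume "enat n \<le> s"
    then show "enat n \<le> Sup {k. f k < x}" using below by (simp add: Sup_upper)
  qed
qed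

lemma star_sup_below:
  assumes "time_warp f" "0 < x" "x < \<infinity>"
  shows "f (star_sup f x) < x"
  using star_sup_below_pred_tw[OF assms(1)] pred_tw_less[OF assms(2,3)] by (rule le_less_trans)

lemma star_sup_above: "star_sup f x \<noteq> \<infinity> \<Longrightarrow> x \<le> f (eSuc (star_sup f x))"
proof (rule ccontr)
  assume "star_sup f x \<noteq> \<infinity>" "\<not> x \<le> f (eSuc (star_sup f x))"
  then have "eSuc (star_sup f x) \<le> star_sup f x" unfolding star_sup_def by (auto intro: Sup_upper)
  then show False using \<open>star_sup f x \<noteq> \<infinity>\<close> by (cases "star_sup f x") (simp_all add: eSuc_enat)
qed

definition tw_last :: "(enat \<Rightarrow> enat) \<Rightarrow> enat" where
  "tw_last f = (LEAST m. f m = f \<infinity>)"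

lemma tw_last_value: "f (tw_last f) = f \<infinity>"
  unfolding tw_last_def by (rule LeastI[of _ \<infinity>]) simp

lemma tw_last_le_iff: "mono f \<Longrightarrow> tw_last f \<le> m \<longleftrightarrow> f m = f \<infinity>"
proof
  assume "mono f" "tw_last f \<le> m"
  then have "f (tw_last f) \<le> f m" "f m \<le> f \<infinity>" by (auto simp: monoD)
  then show "f m = f \<infinity>" using tw_last_value[of f] by simp
next
  assume "f m = f \<infinity>"
  then show "tw_last f \<le> m" unfolding tw_last_def by (rule Least_le)
qed

lemma tw_last_eq_infinity_iff:
  assumes "mono f"
  shows "tw_last f = \<infinity> \<longleftrightarrow> (\<forall>n. f (enat n) < f \<infinity>)"
proof -
  have "tw_last f = \<infinity> \<longleftrightarrow> (\<forall>n. \<not> tw_last f \<le> enat n)" by (cases "tw_last f") auto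
  also have "\<dots> \<longleftrightarrow> (\<forall>n. f (enat n) \<noteq> f \<infinity>)" using tw_last_le_iff[OF assms] by simp
  also have "\<dots> \<longleftrightarrow> (\<forall>n. f (enat n) < f \<infinity>)" using assms by (auto simp: monoD order.strict_iff_order)
  finally show ?thesis .
qed

lemma time_warp_attains_top:
  assumes "time_warp f" "f \<infinity> \<noteq> \<infinity>"
  shows "\<exists>n. f (enat n) = f \<infinity>"
proof -
  have "Sup (range (\<lambda>n. f (enat n))) \<in> range (\<lambda>n. f (enat n))"
    using assms time_warp_infinity[OF assms(1)] by (intro Sup_enat_mem) auto
  then show ?thesis using time_warp_infinity[OF assms(1)] by auto
qed

lemma tw_last_infinity_top:
  assumes "time_warp f" "tw_last f = \<infinity>"
  shows "f \<infinity> = \<infinity>"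
proof (rule ccontr)
  assume "f \<infinity> \<noteq> \<infinity>"
  then obtain n where "f (enat n) = f \<infinity>" using time_warp_attains_top[OF assms(1)] by blast
  moreover have "f (enat n) < f \<infinity>"
    using assms(2) tw_last_eq_infinity_iff[OF time_warp_mono[OF assms(1)]] by simp
  ultimately show False by simp
qed

lemma tw_last_id: "tw_last id = \<infinity>"
  using tw_last_value[of id] by simp

lemma tw_last_comp_eq_infinity_iff:
  assumes f: "time_warp f" and g: "time_warp g"
  shows "tw_last (f \<circ> g) = \<infinity> \<longleftrightarrow> tw_last f = \<infinity> \<and> tw_last g = \<infinity>"
proof -
  have mono: "mono f" "mono g" "mono (f \<circ> g)"
    using f g time_warp_comp by (simp_all add: time_warp_mono)
  show ?thesis
  proof
    assume "tw_last (f \<circ> g) = \<infinity>"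
    then have fg: "f (g (enat n)) < f (g \<infinity>)" for n
      using tw_last_eq_infinity_iff[OF mono(3)] by simp
    have "g (enat n) < g \<infinity>" for n
    proof -
      have "g (enat n) \<noteq> g \<infinity>" using fg[of n] by auto
      moreover have "g (enat n) \<le> g \<infinity>" using mono(2) by (simp add: monoD)
      ultimately show ?thesis by simp
    qed
    then have last_g: "tw_last g = \<infinity>" using tw_last_eq_infinity_iff[OF mono(2)] by simp
    have "f (enat m) < f \<infinity>" for m
    proof -
      have "enat m < (SUP n. g (enat n))"
        using tw_last_infinity_top[OF g last_g] time_warp_infinity[OF g] by simp
      then obtain n where "enat m < g (enat n)" by (auto simp: less_SUP_iff)
      then have "f (enat m) \<le> f (g (enat n))" using mono(1) by (simp add: monoD)
      also have "\<dots> < f \<infinity>" using fg tw_last_infinity_top[OF g last_g] by metis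
      finally show ?thesis .
    qed
    then show "tw_last f = \<infinity> \<and> tw_last g = \<infinity>"
      using last_g tw_last_eq_infinity_iff[OF mono(1)] by simp
  next
    assume last: "tw_last f = \<infinity> \<and> tw_last g = \<infinity>"
    have "f (g (enat n)) < f (g \<infinity>)" for n
    proof -
      have "g (enat n) < \<infinity>"
        using last tw_last_infinity_top[OF g] tw_last_eq_infinity_iff[OF mono(2)] by metis
      then obtain j where "g (enat n) = enat j" by auto
      then show ?thesis
        using last tw_last_infinity_top[OF g] tw_last_eq_infinity_iff[OF mono(1)] by simp
    qed
    then show "tw_last (f \<circ> g) = \<infinity>" using tw_last_eq_infinity_iff[OF mono(3)] by simp
  qed
qed

lemma tw_last_star_sup_eq_infinity_iff:
  assumes f: "time_warp f"
  shows "tw_last (star_sup f) = \<infinity> \<longleftrightarrow> tw_last f = \<infinity>"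
proof
  have mono: "mono f" "mono (star_sup f)" using f star_sup_mono by (simp_all add: time_warp_mono)
  assume last: "tw_last (star_sup f) = \<infinity>"
  show "tw_last f = \<infinity>"
  proof (rule ccontr)
    assume "tw_last f \<noteq> \<infinity>"
    then obtain L where L: "tw_last f = enat L" by auto
    have star_top: "star_sup f \<infinity> = \<infinity>"
      using tw_last_infinity_top[OF time_warp_star_sup last] .
    have "f \<infinity> < \<infinity>"
      using tw_last_value[of f] star_top star_sup_eq_infinity_iff[OF mono(1)] L by metis
    then obtain c where c: "f \<infinity> = enat c" by auto
    have "f (enat n) \<le> f \<infinity>" for n using mono(1) by (simp add: monoD)
    then have "f (enat n) < enat (Suc c)" for n using c by (metis enat_ord_simps(2) le_less_trans lessI)
    then have "star_sup f (enat (Suc c)) = \<infinity>" using star_sup_eq_infinity_iff[OF mono(1)] by blast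
    then have "star_sup f (enat (Suc c)) = star_sup f \<infinity>" using star_top by simp
    then show False using last tw_last_le_iff[OF mono(2), of "enat (Suc c)"] by simp
  qed
next
  have mono: "mono f" using f by (simp add: time_warp_mono)
  assume "tw_last f = \<infinity>"
  then have top: "f \<infinity> = \<infinity>" and below: "f (enat n) < \<infinity>" for n
    using tw_last_infinity_top[OF f] tw_last_eq_infinity_iff[OF mono] by auto
  have "star_sup f (enat m) < star_sup f \<infinity>" for m
  proof -
    have "enat m < (SUP n. f (enat n))" using top time_warp_infinity[OF f] by simp
    then obtain n where "enat m < f (enat n)" by (auto simp: less_SUP_iff)
    then have "star_sup f (enat m) \<noteq> \<infinity>" using star_sup_eq_infinity_iff[OF mono] by (meson not_less_iff_gr_or_eq)
    moreover have "star_sup f \<infinity> = \<infinity>" using below star_sup_eq_infinity_iff[OF mono] by blast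
    ultimately show ?thesis by (cases "star_sup f (enat m)") simp_all
  qed
  then show "tw_last (star_sup f) = \<infinity>" using tw_last_eq_infinity_iff[OF star_sup_mono] by simp
qed

section \<open>Diagrams induced by assignments\<close>

fun sample_val :: "(nat \<Rightarrow> enat \<Rightarrow> enat) \<Rightarrow> (nat \<Rightarrow> enat) \<Rightarrow> sample \<Rightarrow> enat" where
  "sample_val \<sigma> \<rho> (TVar k) = \<rho> k"
| "sample_val \<sigma> \<rho> (App t a) = eval \<sigma> t (sample_val \<sigma> \<rho> a)"
| "sample_val \<sigma> \<rho> (SSuc a) = eSuc (sample_val \<sigma> \<rho> a)"
| "sample_val \<sigma> \<rho> (Last t) = tw_last (eval \<sigma> t)"

lemma diagram_sample_val:
  assumes tw: "\<And>v. time_warp (\<sigma> v)"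
  shows "diagram D (sample_val \<sigma> \<rho>)"
proof -
  let ?\<delta> = "sample_val \<sigma> \<rho>"
  have TW: "time_warp (eval \<sigma> t)" for t using time_warp_eval[OF tw] .
  have mono: "mono (eval \<sigma> t)" for t using time_warp_mono[OF TW] .
  have star: "eval \<sigma> (Star t) = star_sup (eval \<sigma> t)" for t using eval_Star[OF tw] .
  show ?thesis unfolding diagram_def
  proof (intro conjI allI impI)
    fix t a b assume "?\<delta> a \<le> ?\<delta> b"
    then show "?\<delta> (App t a) \<le> ?\<delta> (App t b)" using mono by (simp add: monoD)
  next
    fix t a assume "?\<delta> a = 0"
    then show "?\<delta> (App t a) = 0" using time_warp_zero[OF TW] by simp
  next
    fix t a
    show "?\<delta> (Last t) \<le> ?\<delta> a \<longleftrightarrow> ?\<delta> (App t (Last t)) = ?\<delta> (App t a)"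
      using tw_last_le_iff[OF mono] tw_last_value[of "eval \<sigma> t"] by (simp add: eq_commute)
  next
    fix t assume "?\<delta> (Last t) = \<infinity>"
    then show "?\<delta> (App t (Last t)) = \<infinity>"
      using tw_last_infinity_top[OF TW] tw_last_value[of "eval \<sigma> t"] by simp
  next
    show "?\<delta> (Last One) = \<infinity>" using tw_last_id by simp
  next
    fix t u assume "?\<delta> (Last (Comp t u)) = \<infinity>"
    then show "?\<delta> (Last t) = \<infinity>" "?\<delta> (Last u) = \<infinity>"
      using tw_last_comp_eq_infinity_iff[OF TW TW] by simp_all
  next
    fix t a assume "0 < ?\<delta> a \<and> ?\<delta> a < \<infinity>"
    then show "?\<delta> (App t (App (Star t) a)) < ?\<delta> a"
      using star_sup_below[OF TW] star by (simp del: eval.simps(5))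
  next
    fix t a assume "?\<delta> (App (Star t) a) < \<infinity>"
    then show "?\<delta> a \<le> ?\<delta> (App t (SSuc (App (Star t) a)))"
      using star_sup_above star by (simp del: eval.simps(5))
  next
    fix t assume "?\<delta> (Last (Star t)) = \<infinity>"
    then show "?\<delta> (Last t) = \<infinity>"
      using tw_last_star_sup_eq_infinity_iff[OF TW] star by (simp del: eval.simps(5))
  qed simp_all
qed

lemma eval_joins_less_iff:
  "ts \<noteq> [] \<Longrightarrow> eval \<sigma> (joins ts) x < y \<longleftrightarrow> (\<forall>t\<in>set ts. eval \<sigma> t x < y)"
  by (induction ts rule: joins.induct) (auto simp: sup_max)

lemma diagram_of_refutation:
  assumes "ts \<noteq> []" and "\<not> W_models_le One (joins ts)"
  shows "\<exists>\<delta>. diagram D \<delta> \<and> (\<forall>t\<in>set ts. \<delta> (App t (TVar \<kappa>)) < \<delta> (TVar \<kappa>))"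
proof -
  obtain \<sigma> x where tw: "\<And>v. time_warp (\<sigma> v)" and "eval \<sigma> (joins ts) x < x"
    using assms(2) unfolding W_models_le_def by (auto simp: not_le)
  then have "\<forall>t\<in>set ts. sample_val \<sigma> (\<lambda>_. x) (App t (TVar \<kappa>)) < sample_val \<sigma> (\<lambda>_. x) (TVar \<kappa>)"
    using eval_joins_less_iff[OF assms(1)] by simp
  then show ?thesis using diagram_sample_val[OF tw] by (intro exI conjI)
qed

section \<open>Finiteness of saturations\<close>

fun subterms :: "trm \<Rightarrow> trm set" where
  "subterms (Comp s t) = insert (Comp s t) (subterms s \<union> subterms t)"
| "subterms (Star t) = insert (Star t) (subterms t)"
| "subterms t = {t}"

lemma finite_subterms: "finite (subterms t)"
  by (induction t) auto

lemma self_in_subterms: "t \<in> subterms t"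
  by (cases t) auto

lemma subterms_subsetD: "subterms t \<subseteq> H \<Longrightarrow> t \<in> H"
  using self_in_subterms by blast

fun sample_terms :: "sample \<Rightarrow> trm set" where
  "sample_terms (TVar k) = {}"
| "sample_terms (App t a) = subterms t \<union> sample_terms a"
| "sample_terms (SSuc a) = sample_terms a"
| "sample_terms (Last t) = subterms t"

fun sample_tvars :: "sample \<Rightarrow> nat set" where
  "sample_tvars (TVar k) = {k}"
| "sample_tvars (App t a) = sample_tvars a"
| "sample_tvars (SSuc a) = sample_tvars a"
| "sample_tvars (Last t) = {}"

fun depth :: "sample \<Rightarrow> nat" where
  "depth (App t a) = Suc (depth a)"
| "depth (SSuc a) = Suc (depth a)"
| "depth _ = 0"

text \<open>Unfolding a composition or a star makes a sample deeper, but by no more than the weight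
  it removes from the head term, so \<open>depth_bound\<close> does not grow along steps.\<close>

fun weight :: "trm \<Rightarrow> nat" where
  "weight (Comp s t) = weight s + weight t"
| "weight (Star t) = weight t + 2"
| "weight _ = 1"

fun depth_bound :: "sample \<Rightarrow> nat" where
  "depth_bound (App t a) = max (weight t + depth a) (depth_bound a)"
| "depth_bound (SSuc a) = max (Suc (depth a)) (depth_bound a)"
| "depth_bound _ = 0"

lemma weight_pos: "0 < weight t"
  by (induction t) auto

lemma depth_le_depth_bound: "depth a \<le> depth_bound a"
  using weight_pos by (induction a) (auto simp: le_max_iff_disj Suc_le_eq)

lemma step_invariants:
  "step a b \<Longrightarrow>
    sample_terms b \<subseteq> sample_terms a \<and> sample_tvars b \<subseteq> sample_tvars a \<and>
    depth_bound b \<le> depth_bound a"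
proof (induction rule: step.induct)
  case (3 t a)
  then show ?case using self_in_subterms[of t] by auto
next
  case (4 t u a)
  then show ?case using weight_pos[of u] by auto
qed auto

lemma finite_bounded_samples:
  assumes "finite H" "finite V"
  shows "finite {a. sample_terms a \<subseteq> H \<and> sample_tvars a \<subseteq> V \<and> depth a \<le> n}"
proof (induction n)
  case 0
  have "{a. sample_terms a \<subseteq> H \<and> sample_tvars a \<subseteq> V \<and> depth a \<le> 0} \<subseteq> TVar ` V \<union> Last ` H"
  proof
    fix a assume "a \<in> {a. sample_terms a \<subseteq> H \<and> sample_tvars a \<subseteq> V \<and> depth a \<le> 0}"
    then show "a \<in> TVar ` V \<union> Last ` H" by (cases a) (auto dest: subterms_subsetD)
  qed
  moreover have "finite (TVar ` V \<union> Last ` H)" using assms by simp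
  ultimately show ?case by (rule finite_subset)
next
  case (Suc n)
  let ?B = "{a. sample_terms a \<subseteq> H \<and> sample_tvars a \<subseteq> V \<and> depth a \<le> n}"
  have "{a. sample_terms a \<subseteq> H \<and> sample_tvars a \<subseteq> V \<and> depth a \<le> Suc n} \<subseteq>
      TVar ` V \<union> Last ` H \<union> case_prod App ` (H \<times> ?B) \<union> SSuc ` ?B"
  proof
    fix a assume "a \<in> {a. sample_terms a \<subseteq> H \<and> sample_tvars a \<subseteq> V \<and> depth a \<le> Suc n}"
    then show "a \<in> TVar ` V \<union> Last ` H \<union> case_prod App ` (H \<times> ?B) \<union> SSuc ` ?B"
      by (cases a) (auto dest: subterms_subsetD)
  qed
  moreover have "finite (TVar ` V \<union> Last ` H \<union> case_prod App ` (H \<times> ?B) \<union> SSuc ` ?B)"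
    using assms Suc.IH by simp
  ultimately show ?case by (rule finite_subset)
qed

lemma steps_invariants:
  "step\<^sup>*\<^sup>* a b \<Longrightarrow>
    sample_terms b \<subseteq> sample_terms a \<and> sample_tvars b \<subseteq> sample_tvars a \<and>
    depth_bound b \<le> depth_bound a"
  by (induction rule: rtranclp_induct) (use step_invariants in fastforce)+

lemma finite_sample_terms: "finite (sample_terms a)"
  and finite_sample_tvars: "finite (sample_tvars a)"
  by (induction a) (auto simp: finite_subterms)

lemma finite_saturation:
  assumes "finite D0"
  shows "finite (saturation D0)"
proof -
  let ?H = "\<Union>a\<in>D0. sample_terms a" and ?V = "\<Union>a\<in>D0. sample_tvars a"
  let ?n = "Max (depth_bound ` D0)"
  have "b \<in> {b. sample_terms b \<subseteq> ?H \<and> sample_tvars b \<subseteq> ?V \<and> depth b \<le> ?n}"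
    if b: "b \<in> saturation D0" for b
  proof -
    obtain a where a: "a \<in> D0" "step\<^sup>*\<^sup>* a b" using b unfolding saturation_def by blast
    note inv = steps_invariants[OF a(2)]
    have "depth b \<le> depth_bound a" using inv depth_le_depth_bound[of b] by linarith
    also have "depth_bound a \<le> ?n" using assms a(1) by simp
    finally show ?thesis using inv a(1) by blast
  qed
  then have "saturation D0 \<subseteq> {b. sample_terms b \<subseteq> ?H \<and> sample_tvars b \<subseteq> ?V \<and> depth b \<le> ?n}"
    by blast
  moreover have "finite {b. sample_terms b \<subseteq> ?H \<and> sample_tvars b \<subseteq> ?V \<and> depth b \<le> ?n}"
    using assms by (intro finite_bounded_samples) (simp_all add: finite_sample_terms finite_sample_tvars)
  ultimately show ?thesis by (rule finite_subset)
qed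

lemma subset_saturation: "D0 \<subseteq> saturation D0"
  unfolding saturation_def by auto

lemma saturation_closed: "a \<in> saturation D0 \<Longrightarrow> step a b \<Longrightarrow> b \<in> saturation D0"
  unfolding saturation_def by (auto intro: rtranclp.rtrancl_into_rtrancl)

section \<open>Assignments induced by diagrams\<close>

text \<open>Away from \<open>0\<close>, the largest monotone extension of the data \<open>p a \<mapsto> q a\<close>, capped by
  \<open>x + Q\<close> where \<open>Q\<close> bounds the values at finite data points: the cap changes no data value, and it
  keeps the interpolant finite below \<open>\<omega>\<close> when those values are finite.\<close>

definition interpolant :: "'a set \<Rightarrow> ('a \<Rightarrow> enat) \<Rightarrow> ('a \<Rightarrow> enat) \<Rightarrow> enat \<Rightarrow> enat" where
  "interpolant A p q x =
    (if x = 0 then 0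
     else min (INF a\<in>{a\<in>A. x \<le> p a}. q a) (x + (SUP a\<in>{a\<in>A. p a \<noteq> \<infinity>}. q a)))"

lemma interpolant_mono: "mono (interpolant A p q)"
proof
  let ?I = "\<lambda>x. INF a\<in>{a\<in>A. x \<le> p a}. q a" and ?Q = "SUP a\<in>{a\<in>A. p a \<noteq> \<infinity>}. q a"
  fix x y :: enat assume "x \<le> y"
  show "interpolant A p q x \<le> interpolant A p q y"
  proof (cases "x = 0")
    case False
    have "?I x \<le> ?I y" using \<open>x \<le> y\<close> by (intro INF_superset_mono) auto
    moreover have "x + ?Q \<le> y + ?Q" using \<open>x \<le> y\<close> by (rule add_right_mono)
    ultimately have "min (?I x) (x + ?Q) \<le> min (?I y) (y + ?Q)" by (rule min.mono)
    moreover have "y \<noteq> 0" using False \<open>x \<le> y\<close> by auto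
    ultimately show ?thesis using False unfolding interpolant_def by presburger
  qed (simp add: interpolant_def)
qed

lemma interpolant_eq:
  assumes "a \<in> A"
    and mono: "\<And>a b. a \<in> A \<Longrightarrow> b \<in> A \<Longrightarrow> p a \<le> p b \<Longrightarrow> q a \<le> q b"
    and zero: "\<And>a. a \<in> A \<Longrightarrow> p a = 0 \<Longrightarrow> q a = 0"
  shows "interpolant A p q (p a) = q a"
proof (cases "p a = 0")
  case False
  let ?Q = "SUP a\<in>{a\<in>A. p a \<noteq> \<infinity>}. q a"
  have "(INF b\<in>{b\<in>A. p a \<le> p b}. q b) = q a"
    using \<open>a \<in> A\<close> mono by (intro antisym INF_lower INF_greatest) auto
  moreover have "q a \<le> p a + ?Q"
  proof (cases "p a = \<infinity>")
    case False
    then have "q a \<le> ?Q" using \<open>a \<in> A\<close> by (auto intro: SUP_upper)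
    then show ?thesis by (simp add: add_increasing)
  qed simp
  ultimately show ?thesis using False by (simp add: interpolant_def)
qed (simp add: interpolant_def zero \<open>a \<in> A\<close>)

lemma time_warp_interpolant:
  assumes "finite A"
  shows "time_warp (interpolant A p q)"
proof -
  let ?f = "interpolant A p q"
  let ?G = "INF a\<in>{a\<in>A. p a = \<infinity>}. q a" and ?Q = "SUP a\<in>{a\<in>A. p a \<noteq> \<infinity>}. q a"
  obtain N where N: "\<And>a. a \<in> A \<Longrightarrow> p a \<noteq> \<infinity> \<Longrightarrow> p a \<le> enat N"
    using finite_enat_bounded_below_infinity[of "p ` A"] assms by auto
  have top: "?f \<infinity> = ?G" by (simp add: interpolant_def)
  have beyond: "?f (enat n) = min ?G (enat n + ?Q)" if "N < n" for n
  proof -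
    have "\<not> enat n \<le> p a" if "a \<in> A" "p a \<noteq> \<infinity>" for a
      using N[OF that] \<open>N < n\<close> by (auto simp: not_le intro: le_less_trans)
    then have "{a\<in>A. enat n \<le> p a} = {a\<in>A. p a = \<infinity>}" by force
    then show ?thesis using that by (simp add: interpolant_def zero_enat_def)
  qed
  have "?G \<le> (SUP n. ?f (enat n))"
  proof (rule enat_le_if_finite_le)
    fix c assume "enat c \<le> ?G"
    then have "enat c \<le> ?f (enat (Suc (N + c)))"
      using beyond[of "Suc (N + c)"] by (simp add: add_increasing2)
    also have "\<dots> \<le> (SUP n. ?f (enat n))" by (rule SUP_upper) simp
    finally show "enat c \<le> (SUP n. ?f (enat n))" .
  qed
  moreover have "(SUP n. ?f (enat n)) \<le> ?f \<infinity>"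
    by (rule SUP_least) (simp add: monoD[OF interpolant_mono])
  ultimately have "?f \<infinity> = (SUP n. ?f (enat n))" using top by simp
  then show ?thesis
    using interpolant_mono by (simp add: time_warp_iff interpolant_def)
qed

lemma tw_last_interpolant:
  assumes "finite A" and inf_iff: "\<And>a. a \<in> A \<Longrightarrow> q a = \<infinity> \<longleftrightarrow> p a = \<infinity>"
  shows "tw_last (interpolant A p q) = \<infinity>"
proof -
  let ?f = "interpolant A p q" and ?Q = "SUP a\<in>{a\<in>A. p a \<noteq> \<infinity>}. q a"
  have "?Q \<noteq> \<infinity>"
    using assms(1) inf_iff by (intro Sup_finite_enat_neq_infinity) force+
  then obtain i where i: "?Q = enat i" by auto
  have "?f (enat n) \<le> enat n + ?Q" for n by (simp add: interpolant_def)
  then have below: "?f (enat n) < \<infinity>" for n using i by (metis le_less_trans plus_enat_simps(1) enat_ord_simps(4) enat.distinct(1))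
  moreover have "(INF a\<in>{a\<in>A. \<infinity> \<le> p a}. q a) = \<infinity>"
    using inf_iff by (intro antisym INF_greatest) auto
  then have top: "?f \<infinity> = \<infinity>" by (simp add: interpolant_def)
  show ?thesis
    unfolding tw_last_eq_infinity_iff[OF interpolant_mono] top using below by blast
qed

locale saturated_diagram =
  fixes D :: "sample set" and \<delta> :: "sample \<Rightarrow> enat"
  assumes finite_D: "finite D"
    and closed: "\<And>a b. a \<in> D \<Longrightarrow> step a b \<Longrightarrow> b \<in> D"
    and diagram: "diagram D \<delta>"
begin

lemma arg_mem: "App t a \<in> D \<Longrightarrow> a \<in> D"
  and suc_arg_mem: "SSuc a \<in> D \<Longrightarrow> a \<in> D"
  and app_last_mem: "App t a \<in> D \<Longrightarrow> App t (Last t) \<in> D"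
  and comp_unfold_mem: "App (Comp t u) a \<in> D \<Longrightarrow> App t (App u a) \<in> D"
  and star_unfold_mem: "App (Star t) a \<in> D \<Longrightarrow> App t (App (Star t) a) \<in> D"
  and star_suc_mem: "App (Star t) a \<in> D \<Longrightarrow> App t (SSuc (App (Star t) a)) \<in> D"
  by (auto intro: closed step.intros)

lemma last_mem: "App t a \<in> D \<Longrightarrow> Last t \<in> D"
  using app_last_mem arg_mem by blast

lemma app_mono: "App t a \<in> D \<Longrightarrow> App t b \<in> D \<Longrightarrow> \<delta> a \<le> \<delta> b \<Longrightarrow> \<delta> (App t a) \<le> \<delta> (App t b)"
  using diagram arg_mem unfolding diagram_def by metis

lemma app_zero: "App t a \<in> D \<Longrightarrow> \<delta> a = 0 \<Longrightarrow> \<delta> (App t a) = 0"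
  using diagram arg_mem unfolding diagram_def by metis

lemma suc_value: "SSuc a \<in> D \<Longrightarrow> \<delta> (SSuc a) = eSuc (\<delta> a)"
  using diagram suc_arg_mem unfolding diagram_def by metis

lemma last_le_iff:
  "App t a \<in> D \<Longrightarrow> \<delta> (Last t) \<le> \<delta> a \<longleftrightarrow> \<delta> (App t (Last t)) = \<delta> (App t a)"
  using diagram arg_mem last_mem app_last_mem unfolding diagram_def by metis

lemma app_last_infinity: "App t a \<in> D \<Longrightarrow> \<delta> (Last t) = \<infinity> \<Longrightarrow> \<delta> (App t (Last t)) = \<infinity>"
  using diagram last_mem app_last_mem unfolding diagram_def by metis

lemma one_value: "App One a \<in> D \<Longrightarrow> \<delta> (App One a) = \<delta> a"
  using diagram arg_mem unfolding diagram_def by metis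

lemma comp_value: "App (Comp t u) a \<in> D \<Longrightarrow> \<delta> (App (Comp t u) a) = \<delta> (App t (App u a))"
  using diagram comp_unfold_mem unfolding diagram_def by metis

lemma last_comp_infinity:
  "App (Comp t u) a \<in> D \<Longrightarrow> \<delta> (Last (Comp t u)) = \<infinity> \<Longrightarrow> \<delta> (Last t) = \<infinity> \<and> \<delta> (Last u) = \<infinity>"
  using diagram last_mem comp_unfold_mem arg_mem unfolding diagram_def by metis

lemma star_below:
  "App (Star t) a \<in> D \<Longrightarrow> 0 < \<delta> a \<Longrightarrow> \<delta> a < \<infinity> \<Longrightarrow> \<delta> (App t (App (Star t) a)) < \<delta> a"
  using diagram arg_mem star_unfold_mem unfolding diagram_def by metis

lemma star_above:
  "App (Star t) a \<in> D \<Longrightarrow> \<delta> (App (Star t) a) < \<infinity> \<Longrightarrow> \<delta> a \<le> \<delta> (App t (SSuc (App (Star t) a)))"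
  using diagram arg_mem star_suc_mem unfolding diagram_def by metis

lemma last_star_infinity: "App (Star t) a \<in> D \<Longrightarrow> \<delta> (Last (Star t)) = \<infinity> \<Longrightarrow> \<delta> (Last t) = \<infinity>"
  using diagram last_mem star_unfold_mem unfolding diagram_def by metis

definition assignment :: "nat \<Rightarrow> enat \<Rightarrow> enat" where
  "assignment v = interpolant {a. App (Var v) a \<in> D} \<delta> (\<lambda>a. \<delta> (App (Var v) a))"

lemma finite_arguments: "finite {a. App t a \<in> D}"
  using finite_vimageI[OF finite_D, of "App t"] by (simp add: inj_on_def vimage_def)

lemma time_warp_assignment: "time_warp (assignment v)"
  unfolding assignment_def using finite_arguments by (rule time_warp_interpolant)

lemma assignment_value: "App (Var v) a \<in> D \<Longrightarrow> assignment v (\<delta> a) = \<delta> (App (Var v) a)"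
  unfolding assignment_def by (rule interpolant_eq) (auto intro: app_mono app_zero)

lemma tw_last_assignment:
  assumes "App (Var v) a \<in> D" "\<delta> (Last (Var v)) = \<infinity>"
  shows "tw_last (assignment v) = \<infinity>"
proof -
  have "\<delta> (App (Var v) (Last (Var v))) = \<infinity>" using assms by (rule app_last_infinity)
  then have "\<delta> (App (Var v) b) = \<infinity> \<longleftrightarrow> \<delta> b = \<infinity>" if "App (Var v) b \<in> D" for b
    using last_le_iff[OF that] assms(2) by auto
  then show ?thesis
    unfolding assignment_def using finite_arguments by (intro tw_last_interpolant) auto
qed

lemma time_warp_eval_assignment: "time_warp (eval assignment t)"
  using time_warp_eval time_warp_assignment by blast

lemma eval_assignment_Star: "eval assignment (Star t) = star_sup (eval assignment t)"
  using eval_Star time_warp_assignment by blast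

lemma tw_last_eval_assignment:
  "basic t \<Longrightarrow> App t a \<in> D \<Longrightarrow> \<delta> (Last t) = \<infinity> \<Longrightarrow> tw_last (eval assignment t) = \<infinity>"
proof (induction t arbitrary: a)
  case (Var v)
  then show ?case using tw_last_assignment by simp
next
  case (Comp t u)
  have "App t (App u a) \<in> D" "App u a \<in> D" using Comp.prems(2) by (auto intro: comp_unfold_mem arg_mem)
  moreover have "\<delta> (Last t) = \<infinity>" "\<delta> (Last u) = \<infinity>" using Comp.prems(2,3) last_comp_infinity by auto
  ultimately show ?case using Comp
    unfolding eval.simps tw_last_comp_eq_infinity_iff[OF time_warp_eval_assignment time_warp_eval_assignment]
    by auto
next
  case (Star t)
  have "App t (App (Star t) a) \<in> D" using Star.prems(2) by (rule star_unfold_mem)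
  moreover have "\<delta> (Last t) = \<infinity>" using Star.prems(2,3) by (rule last_star_infinity)
  ultimately show ?case using Star
    unfolding eval_assignment_Star tw_last_star_sup_eq_infinity_iff[OF time_warp_eval_assignment]
    by auto
qed (simp_all add: tw_last_id)

text \<open>Clause (10) says nothing when \<open>\<delta> \<alpha> = \<omega>\<close>; then clause (4) gives \<open>t'[\<alpha>]\<close> the value of
  \<open>t'[last(t')]\<close>, to which (10) applies with argument \<open>last(t')\<close>.\<close>

lemma star_at_infinity:
  assumes s: "App (Star t) a \<in> D" and a: "\<delta> a = \<infinity>"
  shows "\<delta> (App t (App (Star t) a)) < \<infinity> \<or> \<delta> (App (Star t) a) = \<infinity> \<and> \<delta> (Last t) = \<infinity>"
proof -
  let ?l = "Last (Star t)"
  let ?sl = "App (Star t) ?l"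
  have sl: "?sl \<in> D" "App t ?sl \<in> D" using s by (auto intro: app_last_mem star_unfold_mem)
  have "\<delta> ?l \<le> \<delta> a" using a by simp
  then have same: "\<delta> (App (Star t) a) = \<delta> ?sl" using last_le_iff[OF s] by simp
  show ?thesis
  proof (cases "\<delta> ?l = \<infinity>")
    case True
    then show ?thesis using same s by (simp add: app_last_infinity last_star_infinity)
  next
    case False
    have "\<delta> (App t ?sl) < \<infinity>"
    proof (cases "\<delta> ?l = 0")
      case True
      then show ?thesis using sl by (simp add: app_zero)
    next
      case nonzero: False
      then have "\<delta> (App t ?sl) < \<delta> ?l" using False sl(1) by (intro star_below) auto
      moreover have "\<delta> ?l < \<infinity>" using False by simp
      ultimately show ?thesis by (rule less_trans)
    qed
    moreover have "\<delta> (App t (App (Star t) a)) \<le> \<delta> (App t ?sl)"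
      by (rule app_mono) (use same s sl in \<open>auto intro: star_unfold_mem\<close>)
    ultimately show ?thesis using le_less_trans by blast
  qed
qed

lemma star_value:
  assumes "mono f" and s: "App (Star t) a \<in> D"
    and agree: "\<And>b. App t b \<in> D \<Longrightarrow> f (\<delta> b) = \<delta> (App t b)"
    and no_last: "\<delta> (Last t) = \<infinity> \<Longrightarrow> tw_last f = \<infinity>"
  shows "star_sup f (\<delta> a) = \<delta> (App (Star t) a)"
proof (cases "\<delta> a = 0")
  case True
  then show ?thesis using s by (simp add: app_zero star_sup_zero)
next
  case False
  let ?s = "App (Star t) a"
  show ?thesis
  proof (rule star_sup_eqI[OF \<open>mono f\<close>])
    fix n assume "enat n \<le> \<delta> ?s"
    then have "f (enat n) \<le> \<delta> (App t ?s)"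
      using \<open>mono f\<close> agree[OF star_unfold_mem[OF s]] by (metis monoD)
    show "f (enat n) < \<delta> a"
    proof (cases "\<delta> a = \<infinity>")
      case True
      from star_at_infinity[OF s True] have "f (enat n) < \<infinity>"
      proof
        assume "\<delta> (App t ?s) < \<infinity>"
        with \<open>f (enat n) \<le> _\<close> show ?thesis by (rule le_less_trans)
      next
        assume "\<delta> ?s = \<infinity> \<and> \<delta> (Last t) = \<infinity>"
        then have "f (enat n) < f \<infinity>"
          using tw_last_eq_infinity_iff[OF \<open>mono f\<close>] no_last by simp
        then show ?thesis using less_le_trans by fastforce
      qed
      then show ?thesis using True by simp
    next
      case False
      then have "\<delta> (App t ?s) < \<delta> a" using \<open>\<delta> a \<noteq> 0\<close> by (intro star_below[OF s]) auto
      with \<open>f (enat n) \<le> _\<close> show ?thesis by (rule le_less_trans)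
    qed
  next
    assume "\<delta> ?s \<noteq> \<infinity>"
    then have "\<delta> a \<le> \<delta> (App t (SSuc ?s))" using star_above[OF s] by simp
    also have "\<dots> = f (eSuc (\<delta> ?s))"
      using agree[OF star_suc_mem[OF s]] suc_value[OF arg_mem[OF star_suc_mem[OF s]]] by simp
    finally show "\<delta> a \<le> f (eSuc (\<delta> ?s))" .
  qed
qed

lemma eval_assignment: "basic t \<Longrightarrow> App t a \<in> D \<Longrightarrow> eval assignment t (\<delta> a) = \<delta> (App t a)"
proof (induction t arbitrary: a)
  case (Var v)
  then show ?case by (simp add: assignment_value)
next
  case (Comp t u)
  have "App t (App u a) \<in> D" "App u a \<in> D" using Comp.prems(2) by (auto intro: comp_unfold_mem arg_mem)
  then show ?case using Comp by (simp add: comp_value)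
next
  case (Star t)
  have "App t (App (Star t) a) \<in> D" using Star.prems(2) by (rule star_unfold_mem)
  then have "star_sup (eval assignment t) (\<delta> a) = \<delta> (App (Star t) a)"
    using Star by (intro star_value)
      (auto simp: time_warp_mono time_warp_eval_assignment intro: tw_last_eval_assignment)
  then show ?case by (simp only: eval_assignment_Star)
qed (simp_all add: one_value)

end

lemma refutation_of_diagram:
  assumes "ts \<noteq> []" and "\<forall>t\<in>set ts. basic t"
    and diagram: "diagram (saturation ((\<lambda>t. App t (TVar \<kappa>)) ` set ts)) \<delta>"
    and below: "\<forall>t\<in>set ts. \<delta> (App t (TVar \<kappa>)) < \<delta> (TVar \<kappa>)"
  shows "\<not> W_models_le One (joins ts)"
proof -
  interpret saturated_diagram "saturation ((\<lambda>t. App t (TVar \<kappa>)) ` set ts)" \<delta>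
    using diagram by unfold_locales (auto intro: finite_saturation saturation_closed)
  have "eval assignment t (\<delta> (TVar \<kappa>)) < \<delta> (TVar \<kappa>)" if t: "t \<in> set ts" for t
  proof -
    have "App t (TVar \<kappa>) \<in> saturation ((\<lambda>t. App t (TVar \<kappa>)) ` set ts)"
      using t by (intro subsetD[OF subset_saturation]) simp
    then have "eval assignment t (\<delta> (TVar \<kappa>)) = \<delta> (App t (TVar \<kappa>))"
      using t assms(2) eval_assignment by blast
    then show ?thesis using below t by simp
  qed
  then have "eval assignment (joins ts) (\<delta> (TVar \<kappa>)) < \<delta> (TVar \<kappa>)"
    using eval_joins_less_iff[OF assms(1)] by blast
  then show ?thesis
    unfolding W_models_le_def using time_warp_assignment by (auto simp: not_le)
qed

theorem proposition3p10:
  fixes ts :: "trm list" and \<kappa> :: nat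
  assumes "ts \<noteq> []" and "\<forall>t\<in>set ts. basic t"
  shows "(\<not> W_models_le One (joins ts)) \<longleftrightarrow>
    (\<exists>\<delta>. diagram (saturation ((\<lambda>t. App t (TVar \<kappa>)) ` set ts)) \<delta> \<and>
          (\<forall>t\<in>set ts. \<delta> (TVar \<kappa>) > \<delta> (App t (TVar \<kappa>))))"
  using diagram_of_refutation[OF assms(1)] refutation_of_diagram[OF assms] by blast

end
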